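(* Let $T\subset\mathbb{R}^2$ be (the open domain bounded by) a triangle with angles $\alpha\le\beta\le\gamma$. Then \[ A_T\ge\frac{1}{\sin\frac{\alpha}{2}}+\frac{1}{\sin\frac{\beta}{2}}. \]
   Context: For a domain $G\subsetneq\mathbb{R}^n$ let $d_G(x)=d(x,\partial G)$. The quasihyperbolic length of a rectifiable curve $\gamma\subset G$ is $\ell_k(\gamma)=\int_\gamma\frac{|dx|}{d_G(x)}$, and the quasihyperbolic distance is $k_G(x,y)=\inf\ell_k(\gamma)$ over rectifiable curves $\gamma\subset G$ joining $x$ and $y$. The distance ratio metric is $j_G(x,y)=\log\left(1+\frac{|x-y|}{\min\{d_G(x),d_G(y)\}}\right)$. The uniformity constant is $A_G=\inf\{A\ge1: k_G(x,y)\le A\,j_G(x,y)\text{ for all }x,y\in G\}$ (with $\inf\emptyset=+\infty$); $G$ is uniform if $A_G<\infty$. *)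

theory Defs
  imports "HOL-Analysis.Analysis"
begin

definition bdist :: "'a::euclidean_space set \<Rightarrow> 'a \<Rightarrow> real" where
  "bdist G x = infdist x (frontier G)"

definition is_partition :: "(nat \<Rightarrow> real) \<Rightarrow> nat \<Rightarrow> real \<Rightarrow> real \<Rightarrow> bool" where
  "is_partition t m a b \<longleftrightarrow> t 0 = a \<and> t m = b \<and> (\<forall>i<m. t i \<le> t (Suc i))"

definition poly_lengths :: "(real \<Rightarrow> 'a::euclidean_space) \<Rightarrow> real \<Rightarrow> real \<Rightarrow> real set" where
  "poly_lengths g a b =
     {\<Sum>i<m. norm (g (t (Suc i)) - g (t i)) | t m. is_partition t m a b}"

definition rectifiable_path :: "(real \<Rightarrow> 'a::euclidean_space) \<Rightarrow> bool" where
  "rectifiable_path g \<longleftrightarrow> path g \<and> bdd_above (poly_lengths g 0 1)"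

definition curve_length :: "(real \<Rightarrow> 'a::euclidean_space) \<Rightarrow> real \<Rightarrow> real \<Rightarrow> real" where
  "curve_length g a b = Sup (poly_lengths g a b)"

text \<open>Quasihyperbolic length \<open>\<integral>_g |dx|/d_G(x)\<close>, the arc-length (Riemann--Stieltjes)
  integral of the continuous positive function 1/d_G along g, defined as the supremum
  of lower Darboux--Stieltjes sums with respect to arc length.\<close>
definition qh_length :: "'a::euclidean_space set \<Rightarrow> (real \<Rightarrow> 'a) \<Rightarrow> real" where
  "qh_length G g = Sup {\<Sum>i<m. (INF s\<in>{t i..t (Suc i)}. 1 / bdist G (g s))
                               * curve_length g (t i) (t (Suc i)) | t m. is_partition t m 0 1}"

definition qh_dist :: "'a::euclidean_space set \<Rightarrow> 'a \<Rightarrow> 'a \<Rightarrow> real" where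
  "qh_dist G x y = (INF g\<in>{g. rectifiable_path g \<and> path_image g \<subseteq> G \<and>
                                pathstart g = x \<and> pathfinish g = y}. qh_length G g)"

definition j_dist :: "'a::euclidean_space set \<Rightarrow> 'a \<Rightarrow> 'a \<Rightarrow> real" where
  "j_dist G x y = ln (1 + dist x y / min (bdist G x) (bdist G y))"

text \<open>Uniformity constant, with Inf {} = \<infinity> in the extended reals.\<close>
definition unif_const :: "'a::euclidean_space set \<Rightarrow> ereal" where
  "unif_const G = Inf {ereal A | A. A \<ge> 1 \<and>
                     (\<forall>x\<in>G. \<forall>y\<in>G. qh_dist G x y \<le> A * j_dist G x y)}"

definition vertex_angle :: "'a::euclidean_space \<Rightarrow> 'a \<Rightarrow> 'a \<Rightarrow> real" where
  "vertex_angle q p r = arccos (((q - p) \<bullet> (r - p)) / (norm (q - p) * norm (r - p)))"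

end

theory Submission
  imports Defs
begin

text \<open>
  Near a vertex \<open>p\<close> with angle \<open>\<theta>\<close>, every point \<open>z\<close> of the triangle satisfies
  \<open>d(z) \<le> sin (\<theta>/2) |z - p|\<close>, since the foot of the perpendicular from \<open>z\<close> to the side
  making the smaller angle with \<open>z - p\<close> lies on that side. Consequently a subarc that runs from
  the sphere of radius \<open>\<rho>\<close> about \<open>p\<close> to the sphere of radius \<open>q \<rho>\<close> without leaving the ball of
  radius \<open>q \<rho>\<close> has quasihyperbolic length at least \<open>(1 - 1/q) / sin (\<theta>/2)\<close>. A curve from a point
  \<open>x\<close> within \<open>R/q^N\<close> of the vertex \<open>a\<close> to a point \<open>y\<close> within \<open>R/q^N\<close> of the vertex \<open>b\<close> crosses
  \<open>N\<close> such annuli around each of them, so \<open>k(x,y) \<ge> N (1 - 1/q) (1/sin (\<alpha>/2) + 1/sin (\<beta>/2))\<close>.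
  Choosing \<open>x, y\<close> on the segments from the vertices to the centroid keeps \<open>j(x,y) \<le> C + N log q\<close>;
  letting first \<open>N \<rightarrow> \<infinity>\<close> and then \<open>q \<rightarrow> 1\<close> in \<open>k \<le> A j\<close> yields
  \<open>A \<ge> 1/sin (\<alpha>/2) + 1/sin (\<beta>/2)\<close>.
\<close>

section \<open>Partition sums and curve length\<close>

definition partition_sums :: "(real \<Rightarrow> real \<Rightarrow> real) \<Rightarrow> real \<Rightarrow> real \<Rightarrow> real set" where
  "partition_sums F a b = {\<Sum>i<m. F (t i) (t (Suc i)) | t m. is_partition t m a b}"

lemma poly_lengths_eq_partition_sums:
  "poly_lengths g a b = partition_sums (\<lambda>u v. norm (g v - g u)) a b"
  unfolding poly_lengths_def partition_sums_def ..

lemma partition_sumsI: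
  "is_partition t m a b \<Longrightarrow> x = (\<Sum>i<m. F (t i) (t (Suc i))) \<Longrightarrow> x \<in> partition_sums F a b"
  unfolding partition_sums_def by blast

lemma is_partition_mono:
  assumes "is_partition t m a b" "i \<le> j" "j \<le> m"
  shows "t i \<le> t j"
  using assms(2,3)
proof (induction j)
  case (Suc j)
  show ?case
  proof (cases "i = Suc j")
    case False
    with Suc.prems have "t i \<le> t j"
      by (intro Suc.IH) auto
    also have "t j \<le> t (Suc j)"
      using assms(1) Suc.prems(2) unfolding is_partition_def by simp
    finally show ?thesis .
  qed simp
qed simp

lemma is_partition_bounds:
  assumes "is_partition t m a b" "i \<le> m"
  shows "a \<le> t i" "t i \<le> b"
  using is_partition_mono[OF assms(1), of 0 i] is_partition_mono[OF assms(1), of i m] assms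
  unfolding is_partition_def by auto

lemma partition_sums_single: "a \<le> b \<Longrightarrow> F a b \<in> partition_sums F a b"
  unfolding partition_sums_def is_partition_def
  by (rule CollectI, rule exI[of _ "\<lambda>i. if i = 0 then a else b"], rule exI[of _ 1]) auto

lemma partition_sums_append:
  assumes "x \<in> partition_sums F a b" "y \<in> partition_sums F b c"
  shows "x + y \<in> partition_sums F a c"
proof -
  obtain t1 m1 t2 m2 where p: "is_partition t1 m1 a b" "is_partition t2 m2 b c"
    and x: "x = (\<Sum>i<m1. F (t1 i) (t1 (Suc i)))" and y: "y = (\<Sum>i<m2. F (t2 i) (t2 (Suc i)))"
    using assms unfolding partition_sums_def by blast
  define t where "t i = (if i \<le> m1 then t1 i else t2 (i - m1))" for i
  have "is_partition t (m1 + m2) a c"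
    unfolding is_partition_def
  proof (intro conjI allI impI)
    show "t 0 = a" "t (m1 + m2) = c"
      using p unfolding is_partition_def t_def by auto
    fix i assume i: "i < m1 + m2"
    then consider "i < m1" | "i = m1" | "m1 < i" "i - m1 < m2"
      by linarith
    then show "t i \<le> t (Suc i)"
    proof cases
      case 3
      then have "Suc i - m1 = Suc (i - m1)"
        by simp
      with 3 show ?thesis
        using p(2) unfolding is_partition_def t_def by simp
    qed (use p i in \<open>auto simp: is_partition_def t_def\<close>)
  qed
  moreover have "x + y = (\<Sum>i<m1 + m2. F (t i) (t (Suc i)))"
  proof -
    have "(\<Sum>i<m1 + m2. F (t i) (t (Suc i)))
        = (\<Sum>i<m1. F (t i) (t (Suc i))) + (\<Sum>i<m2. F (t (m1 + i)) (t (Suc (m1 + i))))"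
      by (induction m2) (simp_all add: ac_simps)
    also have "(\<Sum>i<m1. F (t i) (t (Suc i))) = x"
      unfolding x t_def by (intro sum.cong) auto
    also have "(\<Sum>i<m2. F (t (m1 + i)) (t (Suc (m1 + i)))) = y"
      using p unfolding y t_def is_partition_def by (intro sum.cong) auto
    finally show ?thesis
      by simp
  qed
  ultimately show ?thesis
    by (rule partition_sumsI)
qed

lemma partition_sums_reflect:
  assumes "x \<in> partition_sums (\<lambda>u v. F (c - v) (c - u)) a b"
  shows "x \<in> partition_sums F (c - b) (c - a)"
proof -
  obtain t m where p: "is_partition t m a b" and x: "x = (\<Sum>i<m. F (c - t (Suc i)) (c - t i))"
    using assms unfolding partition_sums_def by blast
  define t' where "t' i = c - t (m - i)" for i
  have "is_partition t' m (c - b) (c - a)"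
    unfolding is_partition_def
  proof (intro conjI allI impI)
    show "t' 0 = c - b" "t' m = c - a"
      using p unfolding is_partition_def t'_def by auto
    fix i assume "i < m"
    then have "m - i = Suc (m - Suc i)" "m - Suc i < m"
      by auto
    then show "t' i \<le> t' (Suc i)"
      using p unfolding is_partition_def t'_def by simp
  qed
  moreover have "x = (\<Sum>i<m. F (t' i) (t' (Suc i)))"
  proof -
    have "x = (\<Sum>i<m. F (c - t (Suc (m - Suc i))) (c - t (m - Suc i)))"
      unfolding x by (rule sum.nat_diff_reindex[symmetric])
    also have "\<dots> = (\<Sum>i<m. F (t' i) (t' (Suc i)))"
      unfolding t'_def by (intro sum.cong) (simp_all add: Suc_diff_Suc)
    finally show ?thesis .
  qed
  ultimately show ?thesis
    by (rule partition_sumsI)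
qed

lemma chord_in_poly_lengths: "a \<le> b \<Longrightarrow> norm (g b - g a) \<in> poly_lengths g a b"
  unfolding poly_lengths_eq_partition_sums by (rule partition_sums_single)

lemma poly_lengths_append:
  "x \<in> poly_lengths g a b \<Longrightarrow> y \<in> poly_lengths g b c \<Longrightarrow> x + y \<in> poly_lengths g a c"
  unfolding poly_lengths_eq_partition_sums by (rule partition_sums_append)

lemma bdd_above_poly_lengths_subinterval:
  assumes "a \<le> u" "u \<le> v" "v \<le> b" "bdd_above (poly_lengths g a b)"
  shows "bdd_above (poly_lengths g u v)"
proof -
  obtain B where B: "\<And>z. z \<in> poly_lengths g a b \<Longrightarrow> z \<le> B"
    using assms(4) unfolding bdd_above_def by blast
  show ?thesis
  proof (rule bdd_aboveI)
    fix x assume x: "x \<in> poly_lengths g u v"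
    let ?l = "norm (g u - g a)" and ?r = "norm (g b - g v)"
    have "?l + x + ?r \<in> poly_lengths g a b"
      using chord_in_poly_lengths assms(1,3) x by (blast intro: poly_lengths_append)
    then show "x \<le> B"
      using B[of "?l + x + ?r"] norm_ge_zero[of "g u - g a"] norm_ge_zero[of "g b - g v"]
      by linarith
  qed
qed

lemma curve_length_add_le:
  assumes "a \<le> b" "b \<le> c" "bdd_above (poly_lengths g a c)"
  shows "curve_length g a b + curve_length g b c \<le> curve_length g a c"
proof -
  have ne: "poly_lengths g a b \<noteq> {}" "poly_lengths g b c \<noteq> {}"
    using assms(1,2) chord_in_poly_lengths by blast+
  have ab_le: "curve_length g a b \<le> curve_length g a c - y" if y: "y \<in> poly_lengths g b c" for y
    unfolding curve_length_def[of g a b] using ne(1)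
  proof (rule cSup_least)
    fix x assume x: "x \<in> poly_lengths g a b"
    have "x + y \<le> curve_length g a c"
      unfolding curve_length_def by (rule cSup_upper[OF poly_lengths_append[OF x y] assms(3)])
    then show "x \<le> curve_length g a c - y"
      by simp
  qed
  have "curve_length g b c \<le> curve_length g a c - curve_length g a b"
    unfolding curve_length_def[of g b c] using ne(2)
  proof (rule cSup_least)
    fix y assume "y \<in> poly_lengths g b c"
    then show "y \<le> curve_length g a c - curve_length g a b"
      using ab_le by fastforce
  qed
  then show ?thesis
    by simp
qed

lemma chord_le_curve_length:
  assumes "a \<le> b" "bdd_above (poly_lengths g a b)"
  shows "norm (g b - g a) \<le> curve_length g a b"
  unfolding curve_length_def using chord_in_poly_lengths[OF assms(1)] assms(2) by (rule cSup_upper)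

lemma curve_length_nonneg:
  assumes "a \<le> b" "bdd_above (poly_lengths g a b)"
  shows "0 \<le> curve_length g a b"
  using chord_le_curve_length[OF assms] norm_ge_zero order_trans by blast

lemma sum_curve_length_le:
  assumes "is_partition t m a b" "bdd_above (poly_lengths g a b)"
  shows "(\<Sum>i<m. curve_length g (t i) (t (Suc i))) \<le> curve_length g a b"
  using assms
proof (induction m arbitrary: b)
  case 0
  then have "b = a"
    unfolding is_partition_def by simp
  then show ?case
    using curve_length_nonneg[of a a g] 0(2) by simp
next
  case (Suc m)
  have p: "is_partition t m a (t m)"
    using Suc.prems(1) unfolding is_partition_def by simp
  have tm: "a \<le> t m" "t m \<le> b"
    using is_partition_bounds[OF Suc.prems(1), of m] by auto
  have "(\<Sum>i<Suc m. curve_length g (t i) (t (Suc i)))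
      = (\<Sum>i<m. curve_length g (t i) (t (Suc i))) + curve_length g (t m) b"
    using Suc.prems(1) unfolding is_partition_def by simp
  also have "\<dots> \<le> curve_length g a (t m) + curve_length g (t m) b"
    using Suc.IH[OF p] bdd_above_poly_lengths_subinterval[OF _ tm Suc.prems(2)] by simp
  also have "\<dots> \<le> curve_length g a b"
    using curve_length_add_le[OF tm Suc.prems(2)] .
  finally show ?case .
qed

lemma rectifiable_path_bdd_above_poly_lengths:
  assumes "rectifiable_path g" "0 \<le> a" "a \<le> b" "b \<le> 1"
  shows "bdd_above (poly_lengths g a b)"
  using assms bdd_above_poly_lengths_subinterval[of 0 a b 1 g]
  unfolding rectifiable_path_def by simp

lemma rectifiable_path_linepath: "rectifiable_path (linepath x y)"
  unfolding rectifiable_path_def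
proof
  show "path (linepath x y)"
    by simp
  show "bdd_above (poly_lengths (linepath x y) 0 1)"
  proof (rule bdd_aboveI[of _ "norm (y - x)"], unfold poly_lengths_def, clarify)
    fix t m assume p: "is_partition t m 0 1"
    have "(\<Sum>i<m. norm (linepath x y (t (Suc i)) - linepath x y (t i)))
        = (\<Sum>i<m. (t (Suc i) - t i) * norm (y - x))"
    proof (rule sum.cong)
      fix i assume "i \<in> {..<m}"
      then have "t i \<le> t (Suc i)"
        using p unfolding is_partition_def by auto
      moreover have "linepath x y (t (Suc i)) - linepath x y (t i) = (t (Suc i) - t i) *\<^sub>R (y - x)"
        by (simp add: linepath_def algebra_simps)
      ultimately show "norm (linepath x y (t (Suc i)) - linepath x y (t i))
          = (t (Suc i) - t i) * norm (y - x)"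
        by simp
    qed simp
    also have "\<dots> = norm (y - x)"
      using p unfolding is_partition_def
      by (simp add: sum_distrib_right[symmetric] sum_lessThan_telescope)
    finally show "(\<Sum>i<m. norm (linepath x y (t (Suc i)) - linepath x y (t i))) \<le> norm (y - x)"
      by simp
  qed
qed

section \<open>Lower quasihyperbolic sums\<close>

definition qh_term :: "'a::euclidean_space set \<Rightarrow> (real \<Rightarrow> 'a) \<Rightarrow> real \<Rightarrow> real \<Rightarrow> real" where
  "qh_term G g u v = (INF s\<in>{u..v}. 1 / bdist G (g s)) * curve_length g u v"

lemma qh_length_eq_Sup: "qh_length G g = Sup (partition_sums (qh_term G g) 0 1)"
  unfolding qh_length_def partition_sums_def qh_term_def ..

lemma bdist_nonneg: "0 \<le> bdist G x"
  unfolding bdist_def by (rule infdist_nonneg)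

lemma bdd_below_inverse_bdist: "bdd_below ((\<lambda>s. 1 / bdist G (g s)) ` S)"
  by (rule bdd_belowI[of _ 0]) (auto simp: bdist_nonneg)

lemma qh_term_nonneg:
  assumes "rectifiable_path g" "0 \<le> u" "u \<le> v" "v \<le> 1"
  shows "0 \<le> qh_term G g u v"
proof -
  have "0 \<le> (INF s\<in>{u..v}. 1 / bdist G (g s))"
    using assms(3) by (intro cINF_greatest) (auto simp: bdist_nonneg)
  moreover have "0 \<le> curve_length g u v"
    using assms by (intro curve_length_nonneg rectifiable_path_bdd_above_poly_lengths)
  ultimately show ?thesis
    unfolding qh_term_def by simp
qed

lemma qh_term_ge_chord:
  assumes "rectifiable_path g" "0 \<le> u" "u \<le> v" "v \<le> 1"
    and pos: "\<And>s. s \<in> {u..v} \<Longrightarrow> 0 < bdist G (g s)"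
    and le: "\<And>s. s \<in> {u..v} \<Longrightarrow> bdist G (g s) \<le> K"
  shows "norm (g v - g u) / K \<le> qh_term G g u v"
proof -
  have K: "0 < K"
    using pos[of u] le[of u] assms(3) by simp
  have inf: "1 / K \<le> (INF s\<in>{u..v}. 1 / bdist G (g s))"
    using assms(3) pos le K by (intro cINF_greatest) (auto intro!: divide_left_mono mult_pos_pos)
  moreover have "0 \<le> (INF s\<in>{u..v}. 1 / bdist G (g s))"
    by (rule order_trans[OF _ inf]) (use K in simp)
  moreover have "norm (g v - g u) \<le> curve_length g u v"
    using assms(1-4) by (intro chord_le_curve_length rectifiable_path_bdd_above_poly_lengths)
  ultimately have "1 / K * norm (g v - g u) \<le> qh_term G g u v"
    unfolding qh_term_def using K by (intro mult_mono) auto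
  then show ?thesis
    by simp
qed

lemma qh_term_le_curve_length:
  assumes "rectifiable_path g" "0 \<le> u" "u \<le> v" "v \<le> 1"
    and "0 < \<delta>" "\<And>s. s \<in> {u..v} \<Longrightarrow> \<delta> \<le> bdist G (g s)"
  shows "qh_term G g u v \<le> curve_length g u v / \<delta>"
proof -
  have "(INF s\<in>{u..v}. 1 / bdist G (g s)) \<le> 1 / bdist G (g u)"
    using assms(3) by (intro cINF_lower bdd_below_inverse_bdist) auto
  also have "\<dots> \<le> 1 / \<delta>"
    using assms(3,5) assms(6)[of u] by (intro divide_left_mono) auto
  finally have "(INF s\<in>{u..v}. 1 / bdist G (g s)) * curve_length g u v \<le> 1 / \<delta> * curve_length g u v"
    using assms(1-4)
    by (intro mult_right_mono curve_length_nonneg rectifiable_path_bdd_above_poly_lengths)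
  then show ?thesis
    unfolding qh_term_def by simp
qed

lemma bdd_above_qh_sums:
  assumes g: "rectifiable_path g" "path_image g \<subseteq> G" and pos: "\<And>z. z \<in> G \<Longrightarrow> 0 < bdist G z"
  shows "bdd_above (partition_sums (qh_term G g) 0 1)"
proof -
  have "path g"
    using g(1) unfolding rectifiable_path_def by simp
  then obtain z0 where z0: "z0 \<in> path_image g" "\<And>z. z \<in> path_image g \<Longrightarrow> bdist G z0 \<le> bdist G z"
    unfolding bdist_def
    using continuous_attains_inf[OF compact_path_image path_image_nonempty
      continuous_on_infdist[OF continuous_on_id]]
    by blast
  define \<delta> where "\<delta> = bdist G z0"
  have \<delta>: "0 < \<delta>" "\<And>s. s \<in> {0..1} \<Longrightarrow> \<delta> \<le> bdist G (g s)"
    using z0 g(2) pos unfolding \<delta>_def path_image_def by auto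
  show ?thesis
  proof (rule bdd_aboveI[of _ "curve_length g 0 1 / \<delta>"], unfold partition_sums_def, clarify)
    fix t m assume p: "is_partition t m 0 1"
    have "(\<Sum>i<m. qh_term G g (t i) (t (Suc i))) \<le> (\<Sum>i<m. curve_length g (t i) (t (Suc i)) / \<delta>)"
    proof (rule sum_mono)
      fix i assume "i \<in> {..<m}"
      then have "0 \<le> t i" "t i \<le> t (Suc i)" "t (Suc i) \<le> 1"
        using is_partition_bounds[OF p, of i] is_partition_bounds[OF p, of "Suc i"] p
        unfolding is_partition_def by auto
      then show "qh_term G g (t i) (t (Suc i)) \<le> curve_length g (t i) (t (Suc i)) / \<delta>"
        using \<delta> by (intro qh_term_le_curve_length[OF g(1)]) auto
    qed
    also have "\<dots> = (\<Sum>i<m. curve_length g (t i) (t (Suc i))) / \<delta>"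
      by (simp add: sum_divide_distrib)
    also have "\<dots> \<le> curve_length g 0 1 / \<delta>"
    proof (rule divide_right_mono)
      show "(\<Sum>i<m. curve_length g (t i) (t (Suc i))) \<le> curve_length g 0 1"
        using sum_curve_length_le[OF p] g(1) unfolding rectifiable_path_def by blast
    qed (use \<delta> in simp)
    finally show "(\<Sum>i<m. qh_term G g (t i) (t (Suc i))) \<le> curve_length g 0 1 / \<delta>" .
  qed
qed

lemma partition_sums_le_qh_length:
  assumes "rectifiable_path g" "path_image g \<subseteq> G" "\<And>z. z \<in> G \<Longrightarrow> 0 < bdist G z"
    and "x \<in> partition_sums (qh_term G g) 0 1"
  shows "x \<le> qh_length G g"
  unfolding qh_length_eq_Sup using assms(4) bdd_above_qh_sums[OF assms(1-3)] by (rule cSup_upper)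

section \<open>Crossing annuli around a point\<close>

lemma first_hitting_time:
  fixes f :: "real \<Rightarrow> real"
  assumes "a \<le> b" "continuous_on {a..b} f" "f a \<le> L" "L \<le> f b"
  obtains \<tau> where "a \<le> \<tau>" "\<tau> \<le> b" "f \<tau> = L" "\<And>s. a \<le> s \<Longrightarrow> s < \<tau> \<Longrightarrow> f s < L"
proof -
  define S where "S = {s \<in> {a..b}. L \<le> f s}"
  have "closed S"
    unfolding S_def using continuous_closed_preimage[OF assms(2) closed_atLeastAtMost, of "{L..}"]
    by (simp add: vimage_def Int_def conj_commute)
  moreover have "S \<noteq> {}" "bdd_below S"
    using assms unfolding S_def by auto
  ultimately have \<tau>: "Inf S \<in> S"
    by (intro closed_contains_Inf)
  have below: "f s < L" if "a \<le> s" "s < Inf S" for s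
  proof (rule ccontr)
    assume "\<not> f s < L"
    then have "s \<in> S"
      using that \<tau> unfolding S_def by auto
    then show False
      using cInf_lower[OF _ \<open>bdd_below S\<close>] that(2) by fastforce
  qed
  have "\<exists>x. a \<le> x \<and> x \<le> Inf S \<and> f x = L"
    using \<tau> assms(3) unfolding S_def
    by (intro IVT') (auto intro: continuous_on_subset[OF assms(2)])
  then obtain x where x: "a \<le> x" "x \<le> Inf S" "f x = L"
    by blast
  then have "x = Inf S"
    using below[of x] by fastforce
  with x \<tau> below show ?thesis
    using that unfolding S_def by auto
qed

text \<open>
  Here \<open>f\<close> stands for the distance to a point and \<open>F u v\<close> for the cost of the subarc over
  \<open>[u, v]\<close>. If \<open>\<tau>'\<close> is the first time \<open>f\<close> reaches \<open>r q^(k+1)\<close> and \<open>\<tau> \<le> \<tau>'\<close> a time with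
  \<open>f \<tau> = r q^k\<close>, then \<open>f \<le> r q^(k+1)\<close> on \<open>[\<tau>, \<tau>']\<close>, so that piece costs at least \<open>(1 - 1/q)/s\<close>.
\<close>

lemma annuli_crossing_sum:
  fixes f :: "real \<Rightarrow> real" and F :: "real \<Rightarrow> real \<Rightarrow> real"
  assumes "continuous_on {\<alpha>..\<beta>} f" "\<alpha> \<le> \<beta>" "f \<alpha> \<le> r" "r * q ^ N \<le> f \<beta>" "r * q ^ N \<le> R"
    and "0 < r" "1 < q" "0 < s"
    and "\<And>u v. \<alpha> \<le> u \<Longrightarrow> u \<le> v \<Longrightarrow> v \<le> \<beta> \<Longrightarrow> 0 \<le> F u v"
    and "\<And>u v \<rho>. \<alpha> \<le> u \<Longrightarrow> u \<le> v \<Longrightarrow> v \<le> \<beta> \<Longrightarrow> 0 < \<rho> \<Longrightarrow> \<rho> \<le> R \<Longrightarrow>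
           (\<And>w. w \<in> {u..v} \<Longrightarrow> f w \<le> \<rho>) \<Longrightarrow> \<bar>f v - f u\<bar> / (s * \<rho>) \<le> F u v"
  shows "\<exists>x\<in>partition_sums F \<alpha> \<beta>. real N * (1 - 1 / q) / s \<le> x"
  using assms(1-5,9,10)
proof (induction N arbitrary: \<beta>)
  case 0
  then show ?case
    using partition_sums_single[of \<alpha> \<beta> F] by auto
next
  case (Suc N)
  define L where "L = r * q ^ N"
  have L: "0 < L" "r \<le> L" "L \<le> q * L" "q * L \<le> R" "q * L \<le> f \<beta>"
    using Suc.prems(4,5) assms(6,7) by (auto simp: L_def mult.left_commute)
  have "f \<alpha> \<le> q * L"
    using Suc.prems(3) L by linarith
  then obtain \<tau>' where \<tau>': "\<alpha> \<le> \<tau>'" "\<tau>' \<le> \<beta>" "f \<tau>' = q * L" "\<And>w. \<alpha> \<le> w \<Longrightarrow> w < \<tau>' \<Longrightarrow> f w < q * L"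
    using first_hitting_time[OF Suc.prems(2,1) _ L(5)] by blast
  have "\<exists>\<tau>. \<alpha> \<le> \<tau> \<and> \<tau> \<le> \<tau>' \<and> f \<tau> = L"
    using Suc.prems(3) L \<tau>' by (intro IVT') (auto intro: continuous_on_subset[OF Suc.prems(1)])
  then obtain \<tau> where \<tau>: "\<alpha> \<le> \<tau>" "\<tau> \<le> \<tau>'" "f \<tau> = L"
    by blast
  obtain x where x: "x \<in> partition_sums F \<alpha> \<tau>" "real N * (1 - 1 / q) / s \<le> x"
  proof (rule Suc.IH[elim_format])
    show "continuous_on {\<alpha>..\<tau>} f"
      using Suc.prems(1) \<tau> \<tau>' by (auto intro: continuous_on_subset)
  qed (use Suc.prems \<tau> \<tau>' L in \<open>auto simp: L_def\<close>)
  have "\<bar>f \<tau>' - f \<tau>\<bar> / (s * (q * L)) \<le> F \<tau> \<tau>'"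
    using \<tau> \<tau>' L assms(7) by (intro Suc.prems(7)) (auto simp: le_less)
  moreover have "\<bar>f \<tau>' - f \<tau>\<bar> / (s * (q * L)) = (1 - 1 / q) / s"
    using \<tau> \<tau>' L assms(7,8) by (simp add: field_simps)
  moreover have "0 \<le> F \<tau>' \<beta>"
    using \<tau>' by (intro Suc.prems(6)) auto
  moreover have "real (Suc N) * (1 - 1 / q) / s = real N * (1 - 1 / q) / s + (1 - 1 / q) / s"
    by (simp add: add_divide_distrib distrib_right)
  ultimately have "real (Suc N) * (1 - 1 / q) / s \<le> x + F \<tau> \<tau>' + F \<tau>' \<beta>"
    using x(2) by linarith
  moreover have "x + F \<tau> \<tau>' + F \<tau>' \<beta> \<in> partition_sums F \<alpha> \<beta>"
    using partition_sums_append[OF partition_sums_append[OF x(1) partition_sums_single[OF \<tau>(2)]]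
        partition_sums_single[OF \<tau>'(2)]] .
  ultimately show ?case
    by blast
qed

lemma qh_term_ge_near_point:
  assumes g: "rectifiable_path g" "path_image g \<subseteq> G" and pos: "\<And>z. z \<in> G \<Longrightarrow> 0 < bdist G z"
    and near: "\<And>z. z \<in> G \<Longrightarrow> norm (z - p) \<le> R \<Longrightarrow> bdist G z \<le> s * norm (z - p)"
    and uv: "0 \<le> u" "u \<le> v" "v \<le> 1" and "0 \<le> s" "\<rho> \<le> R"
    and in_ball: "\<And>w. w \<in> {u..v} \<Longrightarrow> norm (g w - p) \<le> \<rho>"
  shows "\<bar>norm (g v - p) - norm (g u - p)\<bar> / (s * \<rho>) \<le> qh_term G g u v"
proof -
  have gG: "g w \<in> G" if "w \<in> {u..v}" for w
    using g(2) uv that unfolding path_image_def by auto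
  have "bdist G (g w) \<le> s * \<rho>" if "w \<in> {u..v}" for w
  proof -
    have "norm (g w - p) \<le> R"
      using in_ball[OF that] \<open>\<rho> \<le> R\<close> by linarith
    then have "bdist G (g w) \<le> s * norm (g w - p)"
      using near gG[OF that] by blast
    also have "\<dots> \<le> s * \<rho>"
      using in_ball[OF that] \<open>0 \<le> s\<close> by (rule mult_left_mono)
    finally show ?thesis .
  qed
  then have "norm (g v - g u) / (s * \<rho>) \<le> qh_term G g u v"
    using gG pos by (intro qh_term_ge_chord[OF g(1) uv]) auto
  moreover have "\<bar>norm (g v - p) - norm (g u - p)\<bar> \<le> norm (g v - g u)"
    using norm_triangle_ineq3[of "g v - p" "g u - p"] by simp
  moreover have "0 \<le> s * \<rho>"
    using order_trans[OF norm_ge_zero in_ball[of u]] uv \<open>0 \<le> s\<close> by simp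
  ultimately show ?thesis
    by (meson divide_right_mono order_trans)
qed

lemma qh_sums_crossing_annuli:
  assumes g: "rectifiable_path g" "path_image g \<subseteq> G" and pos: "\<And>z. z \<in> G \<Longrightarrow> 0 < bdist G z"
    and near: "\<And>z. z \<in> G \<Longrightarrow> norm (z - p) \<le> R \<Longrightarrow> bdist G z \<le> s * norm (z - p)"
    and \<alpha>\<beta>: "0 \<le> \<alpha>" "\<alpha> \<le> \<beta>" "\<beta> \<le> 1"
    and "0 < r" "1 < q" "0 < s" "r * q ^ N \<le> R"
    and "norm (g \<alpha> - p) \<le> r" "r * q ^ N \<le> norm (g \<beta> - p)"
  shows "\<exists>x\<in>partition_sums (qh_term G g) \<alpha> \<beta>. real N * (1 - 1 / q) / s \<le> x"
proof (rule annuli_crossing_sum[where f = "\<lambda>w. norm (g w - p)" and R = R])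
  show "continuous_on {\<alpha>..\<beta>} (\<lambda>w. norm (g w - p))"
    using g(1) \<alpha>\<beta> unfolding rectifiable_path_def path_def
    by (intro continuous_intros) (auto intro: continuous_on_subset)
  show "0 \<le> qh_term G g u v" if "\<alpha> \<le> u" "u \<le> v" "v \<le> \<beta>" for u v
    using that \<alpha>\<beta> by (intro qh_term_nonneg[OF g(1)]) auto
  show "\<bar>norm (g v - p) - norm (g u - p)\<bar> / (s * \<rho>) \<le> qh_term G g u v"
    if "\<alpha> \<le> u" "u \<le> v" "v \<le> \<beta>" "0 < \<rho>" "\<rho> \<le> R" "\<And>w. w \<in> {u..v} \<Longrightarrow> norm (g w - p) \<le> \<rho>"
    for u v \<rho>
    using that \<alpha>\<beta> \<open>0 < s\<close> by (intro qh_term_ge_near_point[OF g pos near]) auto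
qed (use \<alpha>\<beta> assms(8-13) in simp_all)

lemma qh_sums_crossing_annuli_reverse:
  assumes g: "rectifiable_path g" "path_image g \<subseteq> G" and pos: "\<And>z. z \<in> G \<Longrightarrow> 0 < bdist G z"
    and near: "\<And>z. z \<in> G \<Longrightarrow> norm (z - p) \<le> R \<Longrightarrow> bdist G z \<le> s * norm (z - p)"
    and \<alpha>\<beta>: "0 \<le> \<alpha>" "\<alpha> \<le> \<beta>" "\<beta> \<le> 1"
    and "0 < r" "1 < q" "0 < s" "r * q ^ N \<le> R"
    and "norm (g \<beta> - p) \<le> r" "r * q ^ N \<le> norm (g \<alpha> - p)"
  shows "\<exists>x\<in>partition_sums (qh_term G g) \<alpha> \<beta>. real N * (1 - 1 / q) / s \<le> x"
proof -
  define c where "c = \<alpha> + \<beta>"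
  have "\<exists>x\<in>partition_sums (\<lambda>u v. qh_term G g (c - v) (c - u)) \<alpha> \<beta>. real N * (1 - 1 / q) / s \<le> x"
  proof (rule annuli_crossing_sum[where f = "\<lambda>w. norm (g (c - w) - p)" and R = R])
    have "continuous_on {\<alpha>..\<beta>} (\<lambda>w. norm (g w - p))"
      using g(1) \<alpha>\<beta> unfolding rectifiable_path_def path_def
      by (intro continuous_intros) (auto intro: continuous_on_subset)
    then show "continuous_on {\<alpha>..\<beta>} (\<lambda>w. norm (g (c - w) - p))"
      by (rule continuous_on_compose2) (auto simp: c_def intro!: continuous_intros)
    show "0 \<le> qh_term G g (c - v) (c - u)" if "\<alpha> \<le> u" "u \<le> v" "v \<le> \<beta>" for u v
      using that \<alpha>\<beta> by (intro qh_term_nonneg[OF g(1)]) (auto simp: c_def)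
    show "\<bar>norm (g (c - v) - p) - norm (g (c - u) - p)\<bar> / (s * \<rho>) \<le> qh_term G g (c - v) (c - u)"
      if "\<alpha> \<le> u" "u \<le> v" "v \<le> \<beta>" "0 < \<rho>" "\<rho> \<le> R"
        and in_ball: "\<And>w. w \<in> {u..v} \<Longrightarrow> norm (g (c - w) - p) \<le> \<rho>"
      for u v \<rho>
    proof -
      have "norm (g w - p) \<le> \<rho>" if "w \<in> {c - v..c - u}" for w
        using that in_ball[of "c - w"] by auto
      then have "\<bar>norm (g (c - u) - p) - norm (g (c - v) - p)\<bar> / (s * \<rho>)
          \<le> qh_term G g (c - v) (c - u)"
        using that(1-5) \<alpha>\<beta> \<open>0 < s\<close>
        by (intro qh_term_ge_near_point[OF g pos near]) (auto simp: c_def)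
      then show ?thesis
        by (simp add: abs_minus_commute)
    qed
  qed (use \<alpha>\<beta> assms(8-13) in \<open>simp_all add: c_def\<close>)
  then show ?thesis
    using partition_sums_reflect[of _ "qh_term G g" c \<alpha> \<beta>] by (auto simp: c_def)
qed

lemma qh_length_ge_near_two_points:
  assumes g: "rectifiable_path g" "path_image g \<subseteq> G" and pos: "\<And>z. z \<in> G \<Longrightarrow> 0 < bdist G z"
    and near_a: "\<And>z. z \<in> G \<Longrightarrow> norm (z - a) \<le> R \<Longrightarrow> bdist G z \<le> sa * norm (z - a)"
    and near_b: "\<And>z. z \<in> G \<Longrightarrow> norm (z - b) \<le> R \<Longrightarrow> bdist G z \<le> sb * norm (z - b)"
    and "0 < sa" "0 < sb" "2 * R \<le> norm (a - b)" "0 < r" "1 < q" "r * q ^ N = R"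
    and start: "norm (g 0 - a) \<le> r" and finish: "norm (g 1 - b) \<le> r"
  shows "real N * (1 - 1 / q) * (1 / sa + 1 / sb) \<le> qh_length G g"
proof -
  have "r * 1 \<le> r * q ^ N"
    using \<open>0 < r\<close> \<open>1 < q\<close> by (intro mult_left_mono) auto
  then have "r \<le> R"
    using \<open>r * q ^ N = R\<close> by simp
  have "norm (a - b) \<le> norm (g 1 - a) + norm (g 1 - b)"
    using norm_triangle_ineq4[of "g 1 - b" "g 1 - a"] by (simp add: norm_minus_commute)
  then have "R \<le> norm (g 1 - a)"
    using finish \<open>r \<le> R\<close> \<open>2 * R \<le> norm (a - b)\<close> by linarith
  moreover have "continuous_on {0..1} (\<lambda>t. norm (g t - a))"
    using g(1) unfolding rectifiable_path_def path_def by (intro continuous_intros) auto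
  ultimately obtain \<tau> where \<tau>: "0 \<le> \<tau>" "\<tau> \<le> 1" "norm (g \<tau> - a) = R"
    using IVT'[of "\<lambda>t. norm (g t - a)" 0 R 1] start \<open>r \<le> R\<close> by auto
  have "norm (a - b) \<le> norm (g \<tau> - a) + norm (g \<tau> - b)"
    using norm_triangle_ineq4[of "g \<tau> - b" "g \<tau> - a"] by (simp add: norm_minus_commute)
  then have "R \<le> norm (g \<tau> - b)"
    using \<tau>(3) \<open>2 * R \<le> norm (a - b)\<close> by linarith
  obtain x where x: "x \<in> partition_sums (qh_term G g) 0 \<tau>" "real N * (1 - 1 / q) / sa \<le> x"
    using qh_sums_crossing_annuli[OF g pos near_a, where \<alpha> = 0 and \<beta> = \<tau> and r = r and q = q
        and N = N] \<tau> start assms(6,9-11) by auto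
  obtain y where y: "y \<in> partition_sums (qh_term G g) \<tau> 1" "real N * (1 - 1 / q) / sb \<le> y"
    using qh_sums_crossing_annuli_reverse[OF g pos near_b, where \<alpha> = \<tau> and \<beta> = 1 and r = r and q = q
        and N = N] \<tau> finish \<open>R \<le> norm (g \<tau> - b)\<close> assms(7,9-11) by auto
  have "x + y \<le> qh_length G g"
    by (rule partition_sums_le_qh_length[OF g pos partition_sums_append[OF x(1) y(1)]])
  moreover have "real N * (1 - 1 / q) * (1 / sa + 1 / sb)
      = real N * (1 - 1 / q) / sa + real N * (1 - 1 / q) / sb"
    by (simp add: distrib_left)
  ultimately show ?thesis
    using x(2) y(2) by linarith
qed

lemma qh_dist_ge_near_two_points:
  assumes "convex G" "x \<in> G" "y \<in> G"
    and "\<And>z. z \<in> G \<Longrightarrow> 0 < bdist G z"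
    and "\<And>z. z \<in> G \<Longrightarrow> norm (z - a) \<le> R \<Longrightarrow> bdist G z \<le> sa * norm (z - a)"
    and "\<And>z. z \<in> G \<Longrightarrow> norm (z - b) \<le> R \<Longrightarrow> bdist G z \<le> sb * norm (z - b)"
    and "0 < sa" "0 < sb" "2 * R \<le> norm (a - b)" "0 < r" "1 < q" "r * q ^ N = R"
    and "norm (x - a) \<le> r" "norm (y - b) \<le> r"
  shows "real N * (1 - 1 / q) * (1 / sa + 1 / sb) \<le> qh_dist G x y"
  unfolding qh_dist_def
proof (rule cINF_greatest)
  have "path_image (linepath x y) \<subseteq> G"
    using assms(1-3) by (simp add: closed_segment_subset)
  then show "{g. rectifiable_path g \<and> path_image g \<subseteq> G \<and> pathstart g = x \<and> pathfinish g = y} \<noteq> {}"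
    using rectifiable_path_linepath[of x y]
    by (intro ex_in_conv[THEN iffD1] exI[of _ "linepath x y"]) auto
next
  fix g assume "g \<in> {g. rectifiable_path g \<and> path_image g \<subseteq> G \<and> pathstart g = x \<and> pathfinish g = y}"
  then show "real N * (1 - 1 / q) * (1 / sa + 1 / sb) \<le> qh_length G g"
    using assms(13,14) by (intro qh_length_ge_near_two_points[OF _ _ assms(4-12)])
      (auto simp: pathstart_def pathfinish_def)
qed

section \<open>Distance to the boundary of a triangle\<close>

text \<open>
  As \<open>(1 - u \<bullet> w) / 2 = sin (\<theta>/2)\<^sup>2\<close> for the angle \<open>\<theta>\<close> between \<open>u\<close> and \<open>w\<close>, a point \<open>z\<close> of the
  cone spanned by \<open>u\<close> and \<open>w\<close> that is closer to the ray of \<open>u\<close> lies within \<open>|z| sin (\<theta>/2)\<close> of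
  the line through \<open>u\<close>.
\<close>

lemma cone_point_near_ray:
  fixes u w :: "'a::real_inner" and x y :: real
  assumes "norm u = 1" "norm w = 1" "y \<le> x" "0 \<le> y"
  defines "z \<equiv> x *\<^sub>R u + y *\<^sub>R w"
  shows "0 \<le> z \<bullet> u" "(norm z)\<^sup>2 - (z \<bullet> u)\<^sup>2 \<le> (norm z)\<^sup>2 * (1 - u \<bullet> w) / 2"
proof -
  let ?c = "u \<bullet> w"
  have uu: "u \<bullet> u = 1" "w \<bullet> w = 1"
    using assms(1,2) by (simp_all add: dot_square_norm)
  have "\<bar>?c\<bar> \<le> 1"
    using Cauchy_Schwarz_ineq2[of u w] assms(1,2) by simp
  then have yc: "- y \<le> y * ?c"
    using mult_left_mono[of "-1" ?c y] assms(4) by simp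
  have zu: "z \<bullet> u = x + y * ?c"
    using uu by (simp add: z_def inner_add_left inner_commute[of w u])
  have zz: "(norm z)\<^sup>2 = x\<^sup>2 + y\<^sup>2 + 2 * x * y * ?c"
    unfolding power2_norm_eq_inner z_def using uu
    by (simp add: inner_add_left inner_add_right inner_commute power2_eq_square algebra_simps)
  show "0 \<le> z \<bullet> u"
    unfolding zu using yc assms(3,4) by linarith
  have "0 \<le> (1 - ?c) / 2 * (x - y) * (x + y + 2 * y * ?c)"
    using \<open>\<bar>?c\<bar> \<le> 1\<close> yc assms(3,4) by (intro mult_nonneg_nonneg) auto
  also have "\<dots> = (x + y * ?c)\<^sup>2 - (x\<^sup>2 + y\<^sup>2 + 2 * x * y * ?c) * (1 + ?c) / 2"
    by (simp add: power2_eq_square algebra_simps divide_simps)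
  finally show "(norm z)\<^sup>2 - (z \<bullet> u)\<^sup>2 \<le> (norm z)\<^sup>2 * (1 - ?c) / 2"
    unfolding zu zz by (simp add: algebra_simps divide_simps)
qed

lemma closed_segment_foot:
  fixes a b z :: "'a::real_inner"
  assumes "b \<noteq> a" "0 \<le> (z - a) \<bullet> ((b - a) /\<^sub>R norm (b - a))" "norm (z - a) \<le> norm (b - a)"
  shows "\<exists>q\<in>closed_segment a b.
           (dist z q)\<^sup>2 = (norm (z - a))\<^sup>2 - ((z - a) \<bullet> ((b - a) /\<^sub>R norm (b - a)))\<^sup>2"
proof -
  define u where "u = (b - a) /\<^sub>R norm (b - a)"
  define s where "s = (z - a) \<bullet> u"
  have u: "norm u = 1" "u \<bullet> u = 1"
    using assms(1) by (simp_all add: u_def dot_square_norm)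
  have "s \<le> norm (z - a)"
    unfolding s_def using norm_cauchy_schwarz[of "z - a" u] u by simp
  define t where "t = s / norm (b - a)"
  have "0 \<le> s" "s \<le> norm (b - a)"
    using assms(2,3) \<open>s \<le> norm (z - a)\<close> by (simp_all add: s_def u_def)
  then have t: "0 \<le> t" "t \<le> 1"
    using assms(1) by (simp_all add: t_def divide_simps)
  have "s *\<^sub>R u = t *\<^sub>R (b - a)"
    by (simp add: u_def t_def divide_inverse mult.commute)
  then have q: "a + s *\<^sub>R u = (1 - t) *\<^sub>R a + t *\<^sub>R b"
    by (simp add: algebra_simps)
  have "dist z (a + s *\<^sub>R u) = norm ((z - a) - s *\<^sub>R u)"
    by (simp add: dist_norm algebra_simps)
  then have "(dist z (a + s *\<^sub>R u))\<^sup>2 = ((z - a) - s *\<^sub>R u) \<bullet> ((z - a) - s *\<^sub>R u)"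
    by (simp only: power2_norm_eq_inner)
  also have "\<dots> = (norm (z - a))\<^sup>2 - 2 * s * s + s * s * (u \<bullet> u)"
    by (simp add: inner_diff_left inner_diff_right power2_norm_eq_inner s_def inner_commute
        algebra_simps)
  also have "\<dots> = (norm (z - a))\<^sup>2 - s\<^sup>2"
    using u(2) by (simp add: power2_eq_square)
  finally have "(dist z (a + s *\<^sub>R u))\<^sup>2 = (norm (z - a))\<^sup>2 - s\<^sup>2" .
  moreover have "a + s *\<^sub>R u \<in> closed_segment a b"
    unfolding q closed_segment_def using t by blast
  ultimately show ?thesis
    unfolding s_def u_def by blast
qed

lemma sin_half_arccos:
  assumes "\<bar>c\<bar> \<le> 1"
  shows "0 \<le> sin (arccos c / 2)" "(sin (arccos c / 2))\<^sup>2 = (1 - c) / 2"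
proof -
  have "0 \<le> arccos c / 2" "arccos c / 2 \<le> pi"
    using arccos_bounded[of c] assms pi_gt_zero by (auto simp: abs_le_iff)
  then show "0 \<le> sin (arccos c / 2)"
    by (rule sin_ge_zero)
  show "(sin (arccos c / 2))\<^sup>2 = (1 - c) / 2"
    using cos_double_sin[of "arccos c / 2"] assms by simp
qed

lemma dist_sides_le_half_angle:
  fixes a b c z :: "'a::euclidean_space"
  assumes "b \<noteq> a" "c \<noteq> a" "0 \<le> v" "0 \<le> w"
    and z: "z = a + v *\<^sub>R (b - a) + w *\<^sub>R (c - a)"
    and "norm (z - a) \<le> norm (b - a)" "norm (z - a) \<le> norm (c - a)"
  shows "\<exists>q\<in>closed_segment a b \<union> closed_segment a c.
           dist z q \<le> norm (z - a) * sin (vertex_angle b a c / 2)"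
proof -
  define u where "u = (b - a) /\<^sub>R norm (b - a)"
  define u' where "u' = (c - a) /\<^sub>R norm (c - a)"
  define X where "X = v * norm (b - a)"
  define Y where "Y = w * norm (c - a)"
  have unit: "norm u = 1" "norm u' = 1"
    using assms(1,2) by (auto simp: u_def u'_def)
  have za: "z - a = X *\<^sub>R u + Y *\<^sub>R u'" "z - a = Y *\<^sub>R u' + X *\<^sub>R u"
    using assms(1,2) by (simp_all add: z X_def Y_def u_def u'_def mult.assoc)
  have XY: "0 \<le> X" "0 \<le> Y"
    using assms(3,4) by (auto simp: X_def Y_def)
  define cc where "cc = u \<bullet> u'"
  have angle: "vertex_angle b a c = arccos cc"
    unfolding vertex_angle_def cc_def u_def u'_def by (simp add: divide_inverse ac_simps)
  have "\<exists>q\<in>closed_segment a b \<union> closed_segment a c. (dist z q)\<^sup>2 \<le> (norm (z - a))\<^sup>2 * (1 - cc) / 2"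
  proof (cases "Y \<le> X")
    case True
    note cone = cone_point_near_ray[OF unit True XY(2), folded za(1)]
    obtain q where "q \<in> closed_segment a b" "(dist z q)\<^sup>2 = (norm (z - a))\<^sup>2 - ((z - a) \<bullet> u)\<^sup>2"
      using closed_segment_foot[OF assms(1)] cone(1) assms(6) unfolding u_def by blast
    then show ?thesis
      using cone(2) unfolding cc_def by (intro bexI[of _ q]) auto
  next
    case False
    then have "X \<le> Y"
      by simp
    note cone = cone_point_near_ray[OF unit(2,1) this XY(1), folded za(2)]
    obtain q where "q \<in> closed_segment a c" "(dist z q)\<^sup>2 = (norm (z - a))\<^sup>2 - ((z - a) \<bullet> u')\<^sup>2"
      using closed_segment_foot[OF assms(2)] cone(1) assms(7) unfolding u'_def by blast
    then show ?thesis
      using cone(2) False unfolding cc_def by (intro bexI[of _ q]) (auto simp: inner_commute)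
  qed
  then obtain q where q: "q \<in> closed_segment a b \<union> closed_segment a c"
    "(dist z q)\<^sup>2 \<le> (norm (z - a))\<^sup>2 * (1 - cc) / 2"
    by blast
  have "\<bar>cc\<bar> \<le> 1"
    using Cauchy_Schwarz_ineq2[of u u'] unit by (simp add: cc_def)
  note sin = sin_half_arccos[OF this]
  have "(norm (z - a) * sin (arccos cc / 2))\<^sup>2 = (norm (z - a))\<^sup>2 * (1 - cc) / 2"
    unfolding power_mult_distrib sin(2) by simp
  then have "(dist z q)\<^sup>2 \<le> (norm (z - a) * sin (arccos cc / 2))\<^sup>2"
    using q(2) by linarith
  then have "dist z q \<le> norm (z - a) * sin (arccos cc / 2)"
    by (rule power2_le_imp_le) (use sin(1) in simp)
  then show ?thesis
    using q(1) unfolding angle by blast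
qed

lemma centroid_in_interior_triangle:
  fixes a b c :: "real^2"
  assumes "\<not> collinear {a, b, c}"
  shows "(1/3) *\<^sub>R a + (1/3) *\<^sub>R b + (1/3) *\<^sub>R c \<in> interior (convex hull {a, b, c})"
  unfolding interior_convex_hull_3_minimal[OF assms, simplified]
  by (simp only: mem_Collect_eq) (intro exI[of _ "1/3::real"] conjI; simp)

lemma frontier_interior_triangle:
  fixes a b c :: "real^2"
  assumes "\<not> collinear {a, b, c}"
  shows "frontier (interior (convex hull {a, b, c}))
           = closed_segment a b \<union> closed_segment b c \<union> closed_segment c a"
proof -
  have ne: "interior (convex hull {a, b, c}) \<noteq> {}"
    using centroid_in_interior_triangle[OF assms] by blast
  have "closed (convex hull {a, b, c})"
    by (simp add: compact_imp_closed finite_imp_compact_convex_hull)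
  then have "frontier (interior (convex hull {a, b, c})) = frontier (convex hull {a, b, c})"
    unfolding frontier_def using convex_closure_interior[OF convex_convex_hull ne]
    by (simp add: closure_closed)
  then show ?thesis
    using frontier_of_triangle[of a b c] by simp
qed

lemma bdist_triangle_le_half_angle:
  fixes a b c z :: "real^2"
  assumes "\<not> collinear {a, b, c}" "z \<in> convex hull {a, b, c}"
    and "norm (z - a) \<le> norm (b - a)" "norm (z - a) \<le> norm (c - a)"
  shows "bdist (interior (convex hull {a, b, c})) z \<le> norm (z - a) * sin (vertex_angle b a c / 2)"
proof -
  have "b \<noteq> a" "c \<noteq> a"
    using assms(1) by (auto simp: collinear_2 insert_commute)
  obtain v w where "z = a + v *\<^sub>R (b - a) + w *\<^sub>R (c - a)" "0 \<le> v" "0 \<le> w"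
    using assms(2) unfolding convex_hull_3_alt by blast
  then obtain q where q: "q \<in> closed_segment a b \<union> closed_segment a c"
    "dist z q \<le> norm (z - a) * sin (vertex_angle b a c / 2)"
    using dist_sides_le_half_angle[OF \<open>b \<noteq> a\<close> \<open>c \<noteq> a\<close> _ _ _ assms(3,4)] by blast
  have "q \<in> frontier (interior (convex hull {a, b, c}))"
    using q(1) closed_segment_commute[of a c] unfolding frontier_interior_triangle[OF assms(1)]
    by blast
  then have "bdist (interior (convex hull {a, b, c})) z \<le> dist z q"
    unfolding bdist_def by (rule infdist_le)
  then show ?thesis
    using q(2) by linarith
qed

lemma sin_half_vertex_angle_pos:
  fixes a b c :: "'a::euclidean_space"
  assumes "\<not> collinear {a, b, c}"
  shows "0 < sin (vertex_angle b a c / 2)"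
proof -
  have "b \<noteq> a" "c \<noteq> a"
    using assms by (auto simp: collinear_2 insert_commute)
  define u where "u = (b - a) /\<^sub>R norm (b - a)"
  define u' where "u' = (c - a) /\<^sub>R norm (c - a)"
  define cc where "cc = u \<bullet> u'"
  have unit: "norm u = 1" "norm u' = 1"
    using \<open>b \<noteq> a\<close> \<open>c \<noteq> a\<close> by (auto simp: u_def u'_def)
  have angle: "vertex_angle b a c = arccos cc"
    unfolding vertex_angle_def cc_def u_def u'_def by (simp add: divide_inverse ac_simps)
  have cc: "\<bar>cc\<bar> \<le> 1"
    using Cauchy_Schwarz_ineq2[of u u'] unit by (simp add: cc_def)
  have "cc \<noteq> 1"
  proof
    assume "cc = 1"
    have "u \<bullet> u = 1" "u' \<bullet> u' = 1"
      using unit by (simp_all add: dot_square_norm)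
    then have "(norm (u - u'))\<^sup>2 = 2 - 2 * cc"
      by (simp add: power2_norm_eq_inner inner_diff_left inner_diff_right inner_commute cc_def)
    with \<open>cc = 1\<close> have "u' = u"
      by simp
    have "c - a = norm (c - a) *\<^sub>R u'"
      using \<open>c \<noteq> a\<close> by (simp add: u'_def)
    also have "\<dots> = (norm (c - a) / norm (b - a)) *\<^sub>R (b - a)"
      unfolding \<open>u' = u\<close> u_def by (simp add: divide_inverse)
    finally have "c - a = (norm (c - a) / norm (b - a)) *\<^sub>R (b - a)" .
    then have "collinear {0, b - a, c - a}"
      unfolding collinear_lemma by blast
    then show False
      using assms collinear_3[of b a c] by (simp add: insert_commute)
  qed
  then have "0 < arccos cc" "arccos cc \<le> pi"
    using arccos_lbound[of cc] arccos_ubound[of cc] arccos_eq_0_iff[of cc] cc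
    by (auto simp: abs_le_iff)
  then show ?thesis
    unfolding angle by (intro sin_gt_zero) auto
qed

lemma bdist_pos:
  assumes "open G" "frontier G \<noteq> {}" "z \<in> G"
  shows "0 < bdist G z"
proof -
  have "z \<notin> frontier G"
    using assms(1,3) by (simp add: frontier_def interior_open)
  then show ?thesis
    unfolding bdist_def using assms(2) by (intro infdist_pos_not_in_closed frontier_closed)
qed

lemma bdist_ge_radius:
  assumes "ball x e \<subseteq> G" "frontier G \<noteq> {}"
  shows "e \<le> bdist G x"
  unfolding bdist_def infdist_notempty[OF assms(2)]
proof (rule cINF_greatest[OF assms(2)])
  fix z assume "z \<in> frontier G"
  then have "z \<notin> ball x e"
    using interior_maximal[OF assms(1) open_ball] by (auto simp: frontier_def)
  then show "e \<le> dist x z"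
    by simp
qed

lemma ball_homothety_subset_convex:
  fixes H :: "'a::real_normed_vector set"
  assumes "convex H" "p \<in> H" "ball m d \<subseteq> H" "0 < l" "l \<le> 1"
  shows "ball (p + l *\<^sub>R (m - p)) (l * d) \<subseteq> H"
proof
  fix v assume v: "v \<in> ball (p + l *\<^sub>R (m - p)) (l * d)"
  define w where "w = p + (1 / l) *\<^sub>R (v - p)"
  have "m - w = (1 / l) *\<^sub>R ((p + l *\<^sub>R (m - p)) - v)"
    using assms(4) by (simp add: w_def algebra_simps)
  then have "dist m w = dist (p + l *\<^sub>R (m - p)) v / l"
    using assms(4) by (simp add: dist_norm)
  also have "\<dots> < d"
    using v assms(4) by (simp add: divide_simps mult.commute)
  finally have "w \<in> H"
    using assms(3) by auto
  moreover have "v = (1 - l) *\<^sub>R p + l *\<^sub>R w"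
    using assms(4) by (simp add: w_def algebra_simps)
  ultimately show "v \<in> H"
    using convexD[OF assms(1,2)] assms(4,5) by simp
qed

lemma homothety_toward_ball:
  fixes H :: "'a::euclidean_space set"
  assumes "convex H" "p \<in> H" "ball m \<delta> \<subseteq> H" "0 < \<delta>" "0 < l" "l \<le> 1"
    and "frontier (interior H) \<noteq> {}"
  shows "p + l *\<^sub>R (m - p) \<in> interior H" "l * \<delta> \<le> bdist (interior H) (p + l *\<^sub>R (m - p))"
proof -
  have ball: "ball (p + l *\<^sub>R (m - p)) (l * \<delta>) \<subseteq> interior H"
    using ball_homothety_subset_convex[OF assms(1-3,5,6)] by (rule interior_maximal) simp
  show "p + l *\<^sub>R (m - p) \<in> interior H"
    by (rule subsetD[OF ball]) (simp add: assms(4,5))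
  show "l * \<delta> \<le> bdist (interior H) (p + l *\<^sub>R (m - p))"
    by (rule bdist_ge_radius[OF ball assms(7)])
qed

section \<open>The uniformity constant\<close>

lemma j_dist_le:
  assumes "dist x y \<le> D" "0 < e" "e \<le> bdist G x" "e \<le> bdist G y"
  shows "j_dist G x y \<le> ln (1 + D / e)"
  unfolding j_dist_def
proof (rule ln_mono)
  have e: "e \<le> min (bdist G x) (bdist G y)"
    using assms(3,4) by simp
  then show "0 < 1 + dist x y / min (bdist G x) (bdist G y)"
    using assms(2) by (intro add_pos_nonneg) auto
  have "dist x y / min (bdist G x) (bdist G y) \<le> D / e"
    using e assms(1,2) zero_le_dist[of x y] by (intro frac_le) linarith+
  then show "1 + dist x y / min (bdist G x) (bdist G y) \<le> 1 + D / e"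
    by simp
qed

lemma ln_one_plus_mult_le:
  fixes K Q :: real
  assumes "0 \<le> K" "1 \<le> Q"
  shows "ln (1 + K * Q) \<le> ln (1 + K) + ln Q"
proof -
  have "ln (1 + K * Q) \<le> ln ((1 + K) * Q)"
    using assms by (intro ln_mono) (auto simp: algebra_simps intro: add_pos_nonneg)
  also have "\<dots> = ln (1 + K) + ln Q"
    using assms by (simp add: ln_mult_pos)
  finally show ?thesis .
qed

lemma crossing_estimates_imp_le:
  fixes A S C :: real
  assumes "0 < A" and bound: "\<And>q N. 1 < q \<Longrightarrow> real N * (1 - 1 / q) * S \<le> A * (C + real N * ln q)"
  shows "S \<le> A"
proof (rule ccontr)
  assume "\<not> S \<le> A"
  define q where "q = (1 + S / A) / 2"
  have q: "1 < q" "A < S / q"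
    using \<open>\<not> S \<le> A\<close> \<open>0 < A\<close> by (auto simp: q_def field_simps)
  define c where "c = (1 - 1 / q) * S - A * ln q"
  have "A * ln q \<le> A * (q - 1)"
    using q(1) \<open>0 < A\<close> by (intro mult_left_mono ln_le_minus_one) auto
  moreover have "A * (q - 1) < S / q * (q - 1)"
    using q by (intro mult_strict_right_mono) auto
  moreover have "S / q * (q - 1) = (1 - 1 / q) * S"
    using q(1) by (simp add: field_simps)
  ultimately have c: "0 < c"
    unfolding c_def by linarith
  define N where "N = nat \<lceil>A * C / c\<rceil> + 1"
  have "A * C / c < real N"
    unfolding N_def by linarith
  then have "A * C < real N * c"
    using c by (simp add: field_simps)
  moreover have "real N * c \<le> A * C"
    using bound[OF q(1), of N] by (simp add: c_def algebra_simps)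
  ultimately show False
    by linarith
qed

lemma convex_crossing_estimate:
  fixes H :: "'a::euclidean_space set"
  assumes H: "convex H" "a \<in> H" "b \<in> H" "ball m \<delta> \<subseteq> H" "0 < \<delta>" "frontier (interior H) \<noteq> {}"
    and near_a: "\<And>z. z \<in> interior H \<Longrightarrow> norm (z - a) \<le> R \<Longrightarrow> bdist (interior H) z \<le> sa * norm (z - a)"
    and near_b: "\<And>z. z \<in> interior H \<Longrightarrow> norm (z - b) \<le> R \<Longrightarrow> bdist (interior H) z \<le> sb * norm (z - b)"
    and "0 < sa" "0 < sb" "0 < R" "2 * R \<le> norm (a - b)"
  obtains C where "\<And>q N. 1 < q \<Longrightarrow> \<exists>x\<in>interior H. \<exists>y\<in>interior H.
      real N * (1 - 1 / q) * (1 / sa + 1 / sb) \<le> qh_dist (interior H) x y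
      \<and> j_dist (interior H) x y \<le> C + real N * ln q"
proof -
  define T where "T = interior H"
  have pos: "\<And>z. z \<in> T \<Longrightarrow> 0 < bdist T z"
    using H(6) by (intro bdist_pos) (simp_all add: T_def)
  define M where "M = max (norm (m - a)) (norm (m - b))"
  have "norm (a - b) \<le> 2 * M"
    using norm_triangle_ineq4[of "m - b" "m - a"] by (simp add: M_def norm_minus_commute)
  then have "R \<le> M" "0 < M"
    using assms(11,12) by linarith+
  define D where "D = norm (a - b) + 2 * M"
  have approach: "p + l *\<^sub>R (m - p) \<in> T \<and> l * \<delta> \<le> bdist T (p + l *\<^sub>R (m - p))
      \<and> norm (p + l *\<^sub>R (m - p) - p) \<le> l * M" if "p \<in> {a, b}" "0 < l" "l \<le> 1" for p l
    using homothety_toward_ball[OF H(1) _ H(4,5)] that H mult_left_mono[of "norm (m - p)" M l]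
    by (auto simp: T_def M_def)
  show ?thesis
  proof (rule that[of "ln (1 + D * M / (\<delta> * R))"])
    fix q :: real and N :: nat
    assume "1 < q"
    define r where "r = R / q ^ N"
    define l where "l = r / M"
    have "1 \<le> q ^ N" "0 < r" "r * q ^ N = R"
      using \<open>1 < q\<close> \<open>0 < R\<close> by (simp_all add: r_def)
    moreover have "R \<le> M * q ^ N"
      using \<open>R \<le> M\<close> \<open>0 < M\<close> \<open>1 \<le> q ^ N\<close> mult_left_mono[of 1 "q ^ N" M] by linarith
    ultimately have "0 < l" "l \<le> 1"
      using \<open>0 < M\<close> by (auto simp: l_def r_def field_simps)
    define x where "x = a + l *\<^sub>R (m - a)"
    define y where "y = b + l *\<^sub>R (m - b)"
    have x: "x \<in> T" "l * \<delta> \<le> bdist T x" "norm (x - a) \<le> r"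
      and y: "y \<in> T" "l * \<delta> \<le> bdist T y" "norm (y - b) \<le> r"
      using approach[of a l] approach[of b l] \<open>0 < l\<close> \<open>l \<le> 1\<close> \<open>0 < M\<close>
      by (simp_all add: x_def y_def l_def)
    have qh: "real N * (1 - 1 / q) * (1 / sa + 1 / sb) \<le> qh_dist T x y"
      using convex_interior[OF H(1)] x(1,3) y(1,3) assms(9,10,12) \<open>0 < r\<close> \<open>1 < q\<close> \<open>r * q ^ N = R\<close>
      by (intro qh_dist_ge_near_two_points[OF _ _ _ pos near_a[folded T_def] near_b[folded T_def]])
        (auto simp: T_def)
    have "r \<le> M"
      using \<open>0 < r\<close> \<open>1 \<le> q ^ N\<close> \<open>r * q ^ N = R\<close> \<open>R \<le> M\<close> mult_left_mono[of 1 "q ^ N" r]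
      by linarith
    then have "dist x y \<le> D"
      using norm_triangle_ineq[of "x - a" "a - y"] norm_triangle_ineq[of "a - b" "b - y"] x(3) y(3)
      by (simp add: dist_norm D_def norm_minus_commute)
    then have "j_dist T x y \<le> ln (1 + D / (l * \<delta>))"
      using x(2) y(2) \<open>0 < l\<close> H(5) by (intro j_dist_le) auto
    also have "D / (l * \<delta>) = D * M / (\<delta> * R) * q ^ N"
      using \<open>0 < M\<close> \<open>0 < R\<close> H(5) \<open>1 < q\<close> by (simp add: l_def r_def field_simps)
    also have "ln (1 + D * M / (\<delta> * R) * q ^ N) \<le> ln (1 + D * M / (\<delta> * R)) + real N * ln q"
    proof -
      have "0 \<le> D * M / (\<delta> * R)"
        using \<open>0 < M\<close> \<open>0 < R\<close> H(5) by (simp add: D_def)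
      from ln_one_plus_mult_le[OF this \<open>1 \<le> q ^ N\<close>] show ?thesis
        using \<open>1 < q\<close> by (simp add: ln_realpow)
    qed
    finally show "\<exists>x\<in>interior H. \<exists>y\<in>interior H. real N * (1 - 1 / q) * (1 / sa + 1 / sb)
        \<le> qh_dist (interior H) x y
        \<and> j_dist (interior H) x y \<le> ln (1 + D * M / (\<delta> * R)) + real N * ln q"
      using x(1) y(1) qh unfolding T_def by blast
  qed
qed

lemma triangle_crossing_estimate:
  fixes a b c :: "real^2"
  assumes "\<not> collinear {a, b, c}"
  defines "T \<equiv> interior (convex hull {a, b, c})"
  obtains C where "\<And>q N. 1 < q \<Longrightarrow> \<exists>x\<in>T. \<exists>y\<in>T.
      real N * (1 - 1 / q) * (1 / sin (vertex_angle b a c / 2) + 1 / sin (vertex_angle a b c / 2))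
        \<le> qh_dist T x y \<and> j_dist T x y \<le> C + real N * ln q"
proof -
  define H where "H = convex hull {a, b, c}"
  have nc': "\<not> collinear {b, a, c}" and H': "convex hull {b, a, c} = H"
    using assms(1) by (simp_all add: H_def insert_commute)
  have "a \<noteq> b" "a \<noteq> c" "b \<noteq> c"
    using assms(1) by (auto simp: collinear_2 insert_commute)
  define R where "R = min (norm (a - b) / 2) (min (norm (a - c)) (norm (b - c)))"
  have R: "0 < R" "2 * R \<le> norm (a - b)"
    using \<open>a \<noteq> b\<close> \<open>a \<noteq> c\<close> \<open>b \<noteq> c\<close> by (auto simp: R_def)
  then have "R \<le> norm (a - b)"
    by linarith
  then have R_le: "R \<le> norm (b - a)" "R \<le> norm (c - a)" "R \<le> norm (c - b)"
    by (auto simp: R_def norm_minus_commute)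
  have hull: "z \<in> H" if "z \<in> interior H" for z
    using that interior_subset by blast
  have near_a: "bdist (interior H) z \<le> sin (vertex_angle b a c / 2) * norm (z - a)"
    if "z \<in> interior H" "norm (z - a) \<le> R" for z
    using bdist_triangle_le_half_angle[OF assms(1), of z] hull[OF that(1)] that(2) R_le
    by (simp add: H_def mult.commute)
  have near_b: "bdist (interior H) z \<le> sin (vertex_angle a b c / 2) * norm (z - b)"
    if "z \<in> interior H" "norm (z - b) \<le> R" for z
    using bdist_triangle_le_half_angle[OF nc', of z] hull[OF that(1)] that(2) R_le
    by (simp add: H' mult.commute norm_minus_commute)
  obtain \<delta> where \<delta>: "ball ((1/3) *\<^sub>R a + (1/3) *\<^sub>R b + (1/3) *\<^sub>R c) \<delta> \<subseteq> H" "0 < \<delta>"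
    using open_contains_ball[of "interior H"] interior_subset
      centroid_in_interior_triangle[OF assms(1)]
    unfolding H_def by blast
  have fr: "frontier (interior H) \<noteq> {}"
    unfolding H_def frontier_interior_triangle[OF assms(1)] by auto
  have "convex H" "a \<in> H" "b \<in> H"
    by (simp_all add: H_def hull_inc)
  then obtain C where "\<And>q N. 1 < q \<Longrightarrow> \<exists>x\<in>interior H. \<exists>y\<in>interior H.
      real N * (1 - 1 / q) * (1 / sin (vertex_angle b a c / 2) + 1 / sin (vertex_angle a b c / 2))
        \<le> qh_dist (interior H) x y \<and> j_dist (interior H) x y \<le> C + real N * ln q"
    using convex_crossing_estimate[where R = R, OF _ _ _ \<delta> fr near_a near_b
        sin_half_vertex_angle_pos[OF assms(1)] sin_half_vertex_angle_pos[OF nc'] R]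
    by blast
  then show ?thesis
    by (rule that[unfolded T_def, folded H_def])
qed

theorem theorem1p7:
  fixes a b c :: "real^2"
  assumes "\<not> collinear {a, b, c}"
    and "vertex_angle b a c \<le> vertex_angle a b c"
    and "vertex_angle a b c \<le> vertex_angle a c b"
  shows "unif_const (interior (convex hull {a, b, c}))
           \<ge> ereal (1 / sin (vertex_angle b a c / 2) + 1 / sin (vertex_angle a b c / 2))"
proof -
  define T where "T = interior (convex hull {a, b, c})"
  define S where "S = 1 / sin (vertex_angle b a c / 2) + 1 / sin (vertex_angle a b c / 2)"
  obtain C where C: "\<And>q N. 1 < q \<Longrightarrow> \<exists>x\<in>T. \<exists>y\<in>T.
      real N * (1 - 1 / q) * S \<le> qh_dist T x y \<and> j_dist T x y \<le> C + real N * ln q"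
    using triangle_crossing_estimate[OF assms(1)] unfolding T_def S_def by blast
  have "S \<le> A" if "1 \<le> A" and unif: "\<forall>x\<in>T. \<forall>y\<in>T. qh_dist T x y \<le> A * j_dist T x y" for A
  proof (rule crossing_estimates_imp_le)
    show "0 < A"
      using that(1) by simp
    fix q :: real and N :: nat
    assume "1 < q"
    then obtain x y where "x \<in> T" "y \<in> T" "real N * (1 - 1 / q) * S \<le> qh_dist T x y"
      "j_dist T x y \<le> C + real N * ln q"
      using C by blast
    moreover have "qh_dist T x y \<le> A * j_dist T x y"
      using unif \<open>x \<in> T\<close> \<open>y \<in> T\<close> by blast
    moreover have "A * j_dist T x y \<le> A * (C + real N * ln q)"
      using \<open>j_dist T x y \<le> C + real N * ln q\<close> that(1) by (intro mult_left_mono) auto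
    ultimately show "real N * (1 - 1 / q) * S \<le> A * (C + real N * ln q)"
      by linarith
  qed
  then show ?thesis
    unfolding unif_const_def T_def[symmetric] S_def[symmetric] by (auto intro!: Inf_greatest)
qed

end
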